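(* Let $\lambda$ be a partition with $n$ parts and let $\eta \in UGC_\lambda(n)$. Then the gapless $\lambda$-tuple $\Delta_\lambda(\eta)$ attains maximum efficiency.
   Context: Fix an integer $n \geq 1$ and write $[k] = \{1,\dots,k\}$. A partition is $\lambda = (\lambda_1,\dots,\lambda_n)$ with $\lambda_1 \geq \dots \geq \lambda_n \geq 0$ integers. Let $R_\lambda \subseteq [n-1]$ be the set of $q \in [n-1]$ with $\lambda_q > \lambda_{q+1}$; write its elements $q_1 < \dots < q_r$, and set $q_0 := 0$, $q_{r+1} := n$. For $h \in [r+1]$ the $h$-th carrel is the index interval $\{q_{h-1}+1,\dots,q_h\}$. A $\lambda$-tuple is an $n$-tuple $\beta$ with entries in $[n]$, considered with this carrel structure; it is upper if $\beta_i \geq i$ for all $i$. $U_\lambda(n)$ is the set of upper $\lambda$-tuples. Critical indices: for $\beta \in U_\lambda(n)$ and $h \in [r+1]$, set $x_1 := q_h$; given $x_{u-1}$, if some index $x$ with $q_{h-1} < x < x_{u-1}$ satisfies $\beta_{x_{u-1}} - \beta_x > x_{u-1} - x$, let $x_u$ be the largest such $x$, otherwise stop. The $x_u$ are the critical indices of $\beta$ in carrel $h$; the pairs $(x_u,\beta_{x_u})$ form its critical list. For $i \in [n]$ let $x(i)$ be the smallest critical index in the carrel of $i$ with $x(i) \geq i$. The $\lambda$-core is $\Delta_\lambda(\beta) := \delta$ with $\delta_i := \beta_{x(i)} - (x(i)-i)$; the $\lambda$-platform is $\Xi_\lambda(\beta) := \xi$ with $\xi_i := \beta_{x(i)}$.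 The critical list is a flag critical list if for every $h \in [r]$, $\beta_{q_h} \leq \beta_k$ where $k$ is the smallest critical index of $\beta$ in carrel $h+1$. $UGC_\lambda(n)$: the $\beta \in U_\lambda(n)$ with flag critical list. $UBP_\lambda(n)$: the $\beta \in U_\lambda(n)$ with $\beta \leq \Xi_\lambda(\beta)$ entrywise. A gapless $\lambda$-tuple is a $\beta \in U_\lambda(n)$ with flag critical list whose entries strictly increase within each carrel. A semistandard tableau of shape $\lambda$ is a filling of the Young diagram of $\lambda$ (row $i$ has $\lambda_i$ boxes) with values in $[n]$, weakly increasing along rows and strictly increasing down columns. For $\beta \in U_\lambda(n)$, $s_\lambda(\beta;x) := \sum_T \prod_{k} x_k^{\theta_k(T)}$ over the semistandard tableaux $T$ of shape $\lambda$ whose values in row $i$ are all at most $\beta_i$, where $\theta_k(T)$ is the number of values of $T$ equal to $k$. For integers $u$, $i \geq 1$, $k \geq 1$: $h_u(i,k;x) := 0$ if $u<0$, and otherwise $h_u(i,k;x) := \sum x_{t_1}\cdots x_{t_u}$ over $i \leq t_1 \leq \dots \leq t_u \leq k$. For $\beta \in U_\lambda(n)$ the Gessel–Viennot determinant of $\beta$ is the $n\times n$ matrix determinant with $(i,j)$ entry $h_{\lambda_j - j + i}(i,\beta_j;x)$. An element $\eta \in UGC_\lambda(n) \cap UBP_\lambda(n)$ attains maximum efficiency if the total number of monomials appearing among the entries of its Gessel–Viennot matrix is smaller than that for the Gessel–Viennot matrix of any other $\eta' \in UGC_\lambda(n) \cap UBP_\lambda(n)$ with $s_\lambda(\eta';x)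 = s_\lambda(\eta;x)$. *)

theory Defs
  imports Main "HOL-Library.Multiset"
begin

text \<open>Conventions. n-tuples and partitions are functions on nat, meaningful on the
index set {1..n}. A lambda-tuple is normalised to be 0 outside {1..n}, so that equality
of tuples is equality of functions.\<close>

definition is_partition :: "nat \<Rightarrow> (nat \<Rightarrow> nat) \<Rightarrow> bool" where
  "is_partition n lam \<longleftrightarrow> (\<forall>i j. 1 \<le> i \<longrightarrow> i \<le> j \<longrightarrow> j \<le> n \<longrightarrow> lam j \<le> lam i)"

definition Rset :: "nat \<Rightarrow> (nat \<Rightarrow> nat) \<Rightarrow> nat set" where
  "Rset n lam = {q \<in> {1..n-1}. lam q > lam (q+1)}"

text \<open>For an index i in {1..n}: its carrel is {carrel_lo i + 1 .. carrel_hi i}.\<close>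
definition carrel_lo :: "nat \<Rightarrow> (nat \<Rightarrow> nat) \<Rightarrow> nat \<Rightarrow> nat" where
  "carrel_lo n lam i = Max (insert 0 {q \<in> Rset n lam. q < i})"

definition carrel_hi :: "nat \<Rightarrow> (nat \<Rightarrow> nat) \<Rightarrow> nat \<Rightarrow> nat" where
  "carrel_hi n lam i = Min (insert n {q \<in> Rset n lam. i \<le> q})"

definition U_set :: "nat \<Rightarrow> (nat \<Rightarrow> nat) set" where
  "U_set n = {\<beta>. (\<forall>i\<in>{1..n}. i \<le> \<beta> i \<and> \<beta> i \<le> n) \<and> (\<forall>i. i \<notin> {1..n} \<longrightarrow> \<beta> i = 0)}"

definition crit_step_cond :: "(nat \<Rightarrow> nat) \<Rightarrow> nat \<Rightarrow> nat \<Rightarrow> nat \<Rightarrow> bool" where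
  "crit_step_cond \<beta> lo x y \<longleftrightarrow> lo < y \<and> y < x \<and> int (\<beta> x) - int (\<beta> y) > int x - int y"

inductive_set crit :: "(nat \<Rightarrow> nat) \<Rightarrow> nat \<Rightarrow> nat \<Rightarrow> nat set"
  for \<beta> :: "nat \<Rightarrow> nat" and lo :: nat and hi :: nat where
  crit_start: "hi \<in> crit \<beta> lo hi"
| crit_next: "x \<in> crit \<beta> lo hi \<Longrightarrow> \<exists>y. crit_step_cond \<beta> lo x y \<Longrightarrow>
      (GREATEST y. crit_step_cond \<beta> lo x y) \<in> crit \<beta> lo hi"

definition xcrit :: "nat \<Rightarrow> (nat \<Rightarrow> nat) \<Rightarrow> (nat \<Rightarrow> nat) \<Rightarrow> nat \<Rightarrow> nat" where
  "xcrit n lam \<beta> i = (LEAST x. x \<in> crit \<beta> (carrel_lo n lam i) (carrel_hi n lam i) \<and> i \<le> x)"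

definition core :: "nat \<Rightarrow> (nat \<Rightarrow> nat) \<Rightarrow> (nat \<Rightarrow> nat) \<Rightarrow> (nat \<Rightarrow> nat)" where
  "core n lam \<beta> = (\<lambda>i. if i \<in> {1..n}
      then nat (int (\<beta> (xcrit n lam \<beta> i)) - (int (xcrit n lam \<beta> i) - int i)) else 0)"

definition platform :: "nat \<Rightarrow> (nat \<Rightarrow> nat) \<Rightarrow> (nat \<Rightarrow> nat) \<Rightarrow> (nat \<Rightarrow> nat)" where
  "platform n lam \<beta> = (\<lambda>i. if i \<in> {1..n} then \<beta> (xcrit n lam \<beta> i) else 0)"

text \<open>Flag critical list: for each q_h in R_lambda, beta(q_h) is at most beta at the
smallest critical index of carrel h+1 = {q_h+1 .. carrel_hi (q_h+1)}.\<close>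
definition flag_crit :: "nat \<Rightarrow> (nat \<Rightarrow> nat) \<Rightarrow> (nat \<Rightarrow> nat) \<Rightarrow> bool" where
  "flag_crit n lam \<beta> \<longleftrightarrow>
     (\<forall>q \<in> Rset n lam. \<beta> q \<le> \<beta> (Min (crit \<beta> q (carrel_hi n lam (q+1)))))"

definition UGC :: "nat \<Rightarrow> (nat \<Rightarrow> nat) \<Rightarrow> (nat \<Rightarrow> nat) set" where
  "UGC n lam = {\<beta> \<in> U_set n. flag_crit n lam \<beta>}"

definition UBP :: "nat \<Rightarrow> (nat \<Rightarrow> nat) \<Rightarrow> (nat \<Rightarrow> nat) set" where
  "UBP n lam = {\<beta> \<in> U_set n. \<forall>i\<in>{1..n}. \<beta> i \<le> platform n lam \<beta> i}"

definition gapless :: "nat \<Rightarrow> (nat \<Rightarrow> nat) \<Rightarrow> (nat \<Rightarrow> nat) \<Rightarrow> bool" where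
  "gapless n lam \<beta> \<longleftrightarrow> \<beta> \<in> UGC n lam \<and>
     (\<forall>i. 1 \<le> i \<longrightarrow> i < n \<longrightarrow> i \<notin> Rset n lam \<longrightarrow> \<beta> i < \<beta> (i+1))"

text \<open>Semistandard tableaux of shape lambda, as fillings T i j (row i, column j),
normalised to 0 outside the Young diagram.\<close>
definition diagram :: "nat \<Rightarrow> (nat \<Rightarrow> nat) \<Rightarrow> (nat \<times> nat) set" where
  "diagram n lam = {(i,j). 1 \<le> i \<and> i \<le> n \<and> 1 \<le> j \<and> j \<le> lam i}"

definition flagged_ssyt :: "nat \<Rightarrow> (nat \<Rightarrow> nat) \<Rightarrow> (nat \<Rightarrow> nat) \<Rightarrow> (nat \<Rightarrow> nat \<Rightarrow> nat) \<Rightarrow> bool" where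
  "flagged_ssyt n lam \<beta> T \<longleftrightarrow>
     (\<forall>(i,j) \<in> diagram n lam. 1 \<le> T i j \<and> T i j \<le> n \<and> T i j \<le> \<beta> i) \<and>
     (\<forall>i j. (i,j) \<notin> diagram n lam \<longrightarrow> T i j = 0) \<and>
     (\<forall>i j. (i,j) \<in> diagram n lam \<longrightarrow> (i,j+1) \<in> diagram n lam \<longrightarrow> T i j \<le> T i (j+1)) \<and>
     (\<forall>i j. (i,j) \<in> diagram n lam \<longrightarrow> (i+1,j) \<in> diagram n lam \<longrightarrow> T i j < T (i+1) j)"

definition content :: "nat \<Rightarrow> (nat \<Rightarrow> nat) \<Rightarrow> (nat \<Rightarrow> nat \<Rightarrow> nat) \<Rightarrow> (nat \<Rightarrow> nat)" where
  "content n lam T = (\<lambda>k. card {(i,j) \<in> diagram n lam. T i j = k})"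

text \<open>The polynomial s_lambda(beta;x), represented by its coefficient function:
the coefficient of the monomial prod_k x_k^(theta k).\<close>
definition schur_coeff :: "nat \<Rightarrow> (nat \<Rightarrow> nat) \<Rightarrow> (nat \<Rightarrow> nat) \<Rightarrow> (nat \<Rightarrow> nat) \<Rightarrow> nat" where
  "schur_coeff n lam \<beta> \<theta> = card {T. flagged_ssyt n lam \<beta> T \<and> content n lam T = \<theta>}"

text \<open>The polynomial h_u(i,k;x), represented by its coefficient function on monomials;
a monomial x_{t_1}...x_{t_u} is represented by the multiset {#t_1,...,t_u#}.\<close>
definition h_coeff :: "int \<Rightarrow> nat \<Rightarrow> nat \<Rightarrow> nat multiset \<Rightarrow> nat" where
  "h_coeff u i k M = (if 0 \<le> u \<and> size M = nat u \<and> set_mset M \<subseteq> {i..k} then 1 else 0)"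

definition num_monomials :: "(nat multiset \<Rightarrow> nat) \<Rightarrow> nat" where
  "num_monomials p = card {M. p M \<noteq> 0}"

text \<open>Total number of monomials among the entries of the Gessel--Viennot matrix,
with (i,j) entry h_{lambda_j - j + i}(i, beta_j; x).\<close>
definition gv_count :: "nat \<Rightarrow> (nat \<Rightarrow> nat) \<Rightarrow> (nat \<Rightarrow> nat) \<Rightarrow> nat" where
  "gv_count n lam \<beta> = (\<Sum>i\<in>{1..n}. \<Sum>j\<in>{1..n}.
      num_monomials (h_coeff (int (lam j) - int j + int i) i (\<beta> j)))"

definition max_efficiency :: "nat \<Rightarrow> (nat \<Rightarrow> nat) \<Rightarrow> (nat \<Rightarrow> nat) \<Rightarrow> bool" where
  "max_efficiency n lam \<eta> \<longleftrightarrow> \<eta> \<in> UGC n lam \<inter> UBP n lam \<and>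
     (\<forall>\<eta>' \<in> UGC n lam \<inter> UBP n lam. \<eta>' \<noteq> \<eta> \<longrightarrow>
        schur_coeff n lam \<eta>' = schur_coeff n lam \<eta> \<longrightarrow>
        gv_count n lam \<eta> < gv_count n lam \<eta>')"

end

theory Submission
  imports Defs
begin

text \<open>Write \<open>excess \<beta> r = \<beta>\<^sub>r - r\<close>. The critical indices of a carrel are the successive
  strict minima of the excess read from the right end \<open>q\<^sub>h\<close>, so \<open>x(i)\<close> minimises the excess
  on \<open>[i, q\<^sub>h]\<close> and \<open>\<Delta>(\<beta>)\<^sub>i = i + min\<^bsub>i \<le> r \<le> q\<^sub>h\<^esub> (\<beta>\<^sub>r - r)\<close>. Hence the excess
  of the core is weakly increasing within each carrel; this gives strict increase of the core
  within carrels, the platform bound, and, with the flag condition of \<open>\<beta>\<close>, its flag condition.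

  For maximal efficiency we show \<open>\<Delta>(\<beta>) \<le> \<beta>'\<close> entrywise for every upper \<open>\<beta>'\<close> with the same
  flagged Schur polynomial; since the number of monomials of \<open>h\<^sub>u(i, k)\<close> grows strictly with
  \<open>k\<close>, any other such \<open>\<beta>'\<close> has more monomials in its Gessel--Viennot matrix. For the comparison,
  fill the rows above \<open>s\<close> with their row index and the other cells with the largest entry the
  flag allows. Equal polynomials and a comparison of entry sums show that these tableaux have
  the same content for \<open>\<Delta>(\<beta>)\<close> and \<open>\<beta>'\<close>, for every \<open>s\<close>; so row \<open>s\<close> carries the same largest
  entries in both. For the core, the last cell of row \<open>s\<close> carries \<open>\<Delta>(\<beta>)\<^sub>s\<close> itself, and an
  entry of row \<open>s\<close> for \<open>\<beta>'\<close> is at most \<open>\<beta>'\<^sub>s\<close>.\<close>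

section \<open>Carrels\<close>

lemma Rset_bounds: "q \<in> Rset n lam \<Longrightarrow> 1 \<le> q \<and> q < n \<and> lam (q+1) < lam q"
  unfolding Rset_def by auto

lemma finite_Rset: "finite (Rset n lam)"
  unfolding Rset_def by auto

lemma carrel_hi_le: "carrel_hi n lam i \<le> n"
  unfolding carrel_hi_def using finite_Rset by (intro Min_le) auto

lemma carrel_hi_le_Rset: "q \<in> Rset n lam \<Longrightarrow> i \<le> q \<Longrightarrow> carrel_hi n lam i \<le> q"
  unfolding carrel_hi_def using finite_Rset by (intro Min_le) auto

lemma carrel_hi_mem: "carrel_hi n lam i \<in> insert n {q \<in> Rset n lam. i \<le> q}"
  unfolding carrel_hi_def using finite_Rset by (intro Min_in) auto

lemma carrel_hi_in_Rset: "carrel_hi n lam i < n \<Longrightarrow> carrel_hi n lam i \<in> Rset n lam"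
  using carrel_hi_mem[of n lam i] by auto

lemma carrel_hi_ge: "i \<le> n \<Longrightarrow> i \<le> carrel_hi n lam i"
  using carrel_hi_mem[of n lam i] by auto

lemma carrel_lo_mem: "carrel_lo n lam i \<in> insert 0 {q \<in> Rset n lam. q < i}"
  unfolding carrel_lo_def using finite_Rset by (intro Max_in) auto

lemma carrel_lo_less: "1 \<le> i \<Longrightarrow> carrel_lo n lam i < i"
  using carrel_lo_mem[of n lam i] by auto

lemma carrel_lo_in_Rset: "0 < carrel_lo n lam i \<Longrightarrow> carrel_lo n lam i \<in> Rset n lam"
  using carrel_lo_mem[of n lam i] by auto

lemma Rset_le_carrel_lo: "q \<in> Rset n lam \<Longrightarrow> q < i \<Longrightarrow> q \<le> carrel_lo n lam i"
  unfolding carrel_lo_def using finite_Rset by (intro Max_ge) auto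

lemma not_Rset_below_carrel_hi: "i \<le> k \<Longrightarrow> k < carrel_hi n lam i \<Longrightarrow> k \<notin> Rset n lam"
  using carrel_hi_le_Rset by fastforce

lemma carrel_hi_Rset: "q \<in> Rset n lam \<Longrightarrow> carrel_hi n lam q = q"
  using carrel_hi_le_Rset carrel_hi_ge Rset_bounds by (metis antisym less_imp_le order_refl)

lemma carrel_lo_Suc_Rset: "q \<in> Rset n lam \<Longrightarrow> carrel_lo n lam (q+1) = q"
  using carrel_lo_less[of "q+1" n lam] Rset_le_carrel_lo[of q n lam "q+1"] by simp

lemma carrel_eq:
  assumes "1 \<le> i" "i \<le> r" "r \<le> carrel_hi n lam i"
  shows "carrel_hi n lam r = carrel_hi n lam i \<and> carrel_lo n lam r = carrel_lo n lam i"
proof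
  have "r \<le> n" using assms(3) carrel_hi_le order_trans by blast
  show hi: "carrel_hi n lam r = carrel_hi n lam i"
  proof (rule antisym)
    show "carrel_hi n lam r \<le> carrel_hi n lam i"
      using carrel_hi_le_Rset[OF carrel_hi_in_Rset] carrel_hi_le assms(3)
      by (metis antisym_conv1)
    show "carrel_hi n lam i \<le> carrel_hi n lam r"
      using carrel_hi_le_Rset[OF carrel_hi_in_Rset, of n lam r i] carrel_hi_le[of n lam i]
        carrel_hi_le[of n lam r] carrel_hi_ge[OF \<open>r \<le> n\<close>, of lam] assms(2)
      by (cases "carrel_hi n lam r < n") auto
  qed
  have "carrel_lo n lam r < i"
  proof (rule ccontr)
    assume "\<not> carrel_lo n lam r < i"
    then have "carrel_lo n lam r \<in> Rset n lam" "i \<le> carrel_lo n lam r"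
      using carrel_lo_in_Rset assms(1) by fastforce+
    then have "carrel_hi n lam i \<le> carrel_lo n lam r" by (rule carrel_hi_le_Rset)
    then show False using carrel_lo_less[of r n lam] assms by linarith
  qed
  then show "carrel_lo n lam r = carrel_lo n lam i"
  proof (intro antisym)
    show "carrel_lo n lam r \<le> carrel_lo n lam i" if "carrel_lo n lam r < i"
      using that carrel_lo_in_Rset[of n lam r] Rset_le_carrel_lo[of "carrel_lo n lam r" n lam i]
      by (cases "0 < carrel_lo n lam r") auto
    show "carrel_lo n lam i \<le> carrel_lo n lam r"
      using carrel_lo_less[OF assms(1), of n lam] assms(2) carrel_lo_in_Rset[of n lam i]
        Rset_le_carrel_lo[of "carrel_lo n lam i" n lam r]
      by (cases "0 < carrel_lo n lam i") auto
  qed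
qed

lemma lam_eq_in_carrel:
  assumes "is_partition n lam" "1 \<le> i" "i \<le> r" "r \<le> carrel_hi n lam i"
  shows "lam r = lam i"
  using assms(3,4)
proof (induction r rule: dec_induct)
  case base
  then show ?case by simp
next
  case (step k)
  have "k < n" using step carrel_hi_le[of n lam i] by linarith
  moreover have "k \<notin> Rset n lam" using not_Rset_below_carrel_hi step by simp
  ultimately have "lam k \<le> lam (k+1)" using step assms(2) unfolding Rset_def by auto
  moreover have "lam (k+1) \<le> lam k"
    using assms(1,2) step \<open>k < n\<close> unfolding is_partition_def by simp
  moreover have "lam k = lam i" using step.IH step.prems by simp
  ultimately show ?case by simp
qed

lemma lam_less_beyond_carrel:
  assumes "is_partition n lam" "1 \<le> i" "i \<le> n" "carrel_hi n lam i < r" "r \<le> n"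
  shows "lam r < lam i"
proof -
  let ?h = "carrel_hi n lam i"
  have h: "i \<le> ?h" "?h \<in> Rset n lam"
    using carrel_hi_ge carrel_hi_in_Rset assms(3-5) by auto
  have "lam r \<le> lam (?h+1)"
    using assms(1,4,5) h(1) assms(2) unfolding is_partition_def by simp
  also have "\<dots> < lam ?h" using Rset_bounds[OF h(2)] by simp
  also have "\<dots> = lam i" using lam_eq_in_carrel[OF assms(1,2) h(1)] by simp
  finally show ?thesis .
qed

section \<open>Critical indices and the core\<close>

definition excess :: "(nat \<Rightarrow> nat) \<Rightarrow> nat \<Rightarrow> int" where
  "excess \<beta> r = int (\<beta> r) - int r"

lemma crit_step_cond_iff:
  "crit_step_cond \<beta> lo x y \<longleftrightarrow> lo < y \<and> y < x \<and> excess \<beta> y < excess \<beta> x"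
  unfolding crit_step_cond_def excess_def by auto

lemma crit_step_cond_Greatest:
  assumes "crit_step_cond \<beta> lo x y"
  shows "crit_step_cond \<beta> lo x (GREATEST y. crit_step_cond \<beta> lo x y)"
    and "y \<le> (GREATEST y. crit_step_cond \<beta> lo x y)"
proof -
  have bound: "\<And>z. crit_step_cond \<beta> lo x z \<Longrightarrow> z \<le> x" unfolding crit_step_cond_def by auto
  show "crit_step_cond \<beta> lo x (GREATEST y. crit_step_cond \<beta> lo x y)"
    using GreatestI_nat[of "crit_step_cond \<beta> lo x", OF assms bound] .
  show "y \<le> (GREATEST y. crit_step_cond \<beta> lo x y)"
    using Greatest_le_nat[of "crit_step_cond \<beta> lo x", OF assms bound] .
qed

lemma crit_bounds:
  assumes "x \<in> crit \<beta> lo hi"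
  shows "x \<le> hi \<and> (x = hi \<or> lo < x)"
  using assms
proof (induction rule: crit.induct)
  case (crit_next x)
  then obtain y where "crit_step_cond \<beta> lo x y" by blast
  then have "crit_step_cond \<beta> lo x (GREATEST y. crit_step_cond \<beta> lo x y)"
    by (rule crit_step_cond_Greatest(1))
  then show ?case using crit_next.IH unfolding crit_step_cond_def by simp
qed simp

lemma finite_crit: "finite (crit \<beta> lo hi)"
  by (rule finite_subset[of _ "{..hi}"]) (auto dest: crit_bounds)

lemma excess_crit_le:
  assumes "x \<in> crit \<beta> lo hi" "x \<le> r" "r \<le> hi"
  shows "excess \<beta> x \<le> excess \<beta> r"
  using assms
proof (induction arbitrary: r rule: crit.induct)
  case crit_start
  then show ?case by simp
next
  case (crit_next x)
  let ?y = "GREATEST y. crit_step_cond \<beta> lo x y"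
  obtain y0 where "crit_step_cond \<beta> lo x y0" using crit_next.hyps by blast
  then have y: "lo < ?y" "?y < x" "excess \<beta> ?y < excess \<beta> x"
    using crit_step_cond_Greatest(1) crit_step_cond_iff by blast+
  show ?case
  proof (cases "x \<le> r")
    case True
    then have "excess \<beta> x \<le> excess \<beta> r" using crit_next.IH crit_next.prems(2) by blast
    then show ?thesis using y(3) by simp
  next
    case False
    consider "r = ?y" | "?y < r" using crit_next.prems(1) by linarith
    then show ?thesis
    proof cases
      case 2
      then have "\<not> crit_step_cond \<beta> lo x r" using crit_step_cond_Greatest(2) leD by blast
      then have "excess \<beta> x \<le> excess \<beta> r"
        using 2 y(1) False unfolding crit_step_cond_iff by auto
      then show ?thesis using y(3) by simp
    qed simp
  qed
qed

lemma xcrit_mem: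
  assumes "i \<le> n"
  shows "xcrit n lam \<beta> i \<in> crit \<beta> (carrel_lo n lam i) (carrel_hi n lam i)"
    and "i \<le> xcrit n lam \<beta> i"
proof -
  let ?P = "\<lambda>x. x \<in> crit \<beta> (carrel_lo n lam i) (carrel_hi n lam i) \<and> i \<le> x"
  have "?P (carrel_hi n lam i)" using crit.crit_start carrel_hi_ge[OF assms] by blast
  then have "?P (xcrit n lam \<beta> i)" unfolding xcrit_def by (rule LeastI)
  then show "xcrit n lam \<beta> i \<in> crit \<beta> (carrel_lo n lam i) (carrel_hi n lam i)"
    and "i \<le> xcrit n lam \<beta> i" by simp_all
qed

lemma xcrit_le_carrel_hi: "i \<le> n \<Longrightarrow> xcrit n lam \<beta> i \<le> carrel_hi n lam i"
  using xcrit_mem(1) crit_bounds by blast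

lemma xcrit_le_crit:
  "y \<in> crit \<beta> (carrel_lo n lam i) (carrel_hi n lam i) \<Longrightarrow> i \<le> y \<Longrightarrow> xcrit n lam \<beta> i \<le> y"
  unfolding xcrit_def by (rule Least_le) simp

lemma excess_xcrit_le:
  assumes "1 \<le> i" "i \<le> n" "i \<le> r" "r \<le> carrel_hi n lam i"
  shows "excess \<beta> (xcrit n lam \<beta> i) \<le> excess \<beta> r"
proof (cases "xcrit n lam \<beta> i \<le> r")
  case True
  then show ?thesis using excess_crit_le xcrit_mem(1)[OF assms(2)] assms(4) by blast
next
  case False
  let ?lo = "carrel_lo n lam i" and ?x = "xcrit n lam \<beta> i"
  show ?thesis
  proof (rule ccontr)
    assume "\<not> ?thesis"
    then have step: "crit_step_cond \<beta> ?lo ?x r"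
      using False carrel_lo_less[OF assms(1), of n lam] assms(3) unfolding crit_step_cond_iff by simp
    let ?g = "GREATEST y. crit_step_cond \<beta> ?lo ?x y"
    have "?g \<in> crit \<beta> ?lo (carrel_hi n lam i)"
      using crit.crit_next xcrit_mem(1)[OF assms(2)] step by blast
    moreover have "i \<le> ?g" using crit_step_cond_Greatest(2)[OF step] assms(3) by simp
    ultimately have "?x \<le> ?g" by (rule xcrit_le_crit)
    moreover have "?g < ?x"
      using crit_step_cond_Greatest(1)[OF step] unfolding crit_step_cond_def by blast
    ultimately show False by simp
  qed
qed

lemma xcrit_eq:
  assumes "1 \<le> i" "i \<le> n" "i \<le> r" "r \<le> xcrit n lam \<beta> i"
  shows "xcrit n lam \<beta> r = xcrit n lam \<beta> i"
proof -
  have "r \<le> carrel_hi n lam i" using assms(4) xcrit_le_carrel_hi[OF assms(2), of lam \<beta>] by simp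
  then have carrel: "carrel_hi n lam r = carrel_hi n lam i" "carrel_lo n lam r = carrel_lo n lam i"
    using carrel_eq[OF assms(1,3)] by simp_all
  let ?C = "crit \<beta> (carrel_lo n lam i) (carrel_hi n lam i)"
  have "xcrit n lam \<beta> r = (LEAST y. y \<in> ?C \<and> r \<le> y)" unfolding xcrit_def carrel ..
  also have "\<dots> = xcrit n lam \<beta> i"
  proof (rule Least_equality)
    show "xcrit n lam \<beta> i \<in> ?C \<and> r \<le> xcrit n lam \<beta> i"
      using xcrit_mem(1)[OF assms(2)] assms(4) by simp
    show "\<And>y. y \<in> ?C \<and> r \<le> y \<Longrightarrow> xcrit n lam \<beta> i \<le> y"
      using xcrit_le_crit assms(3) by fastforce
  qed
  finally show ?thesis .
qed

lemma U_set_bounds: "\<beta> \<in> U_set n \<Longrightarrow> 1 \<le> i \<Longrightarrow> i \<le> n \<Longrightarrow> i \<le> \<beta> i \<and> \<beta> i \<le> n"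
  unfolding U_set_def by auto

lemma excess_core:
  assumes "\<beta> \<in> U_set n" "1 \<le> i" "i \<le> n"
  shows "excess (core n lam \<beta>) i = excess \<beta> (xcrit n lam \<beta> i)"
proof -
  let ?x = "xcrit n lam \<beta> i"
  have "i \<le> ?x" using xcrit_mem(2)[OF assms(3)] .
  have "?x \<le> n" using xcrit_le_carrel_hi[OF assms(3), of lam \<beta>] carrel_hi_le[of n lam i] by linarith
  then have "?x \<le> \<beta> ?x" using U_set_bounds[OF assms(1), of ?x] assms(2) \<open>i \<le> ?x\<close> by simp
  then show ?thesis unfolding core_def excess_def using assms(2,3) \<open>i \<le> ?x\<close> by simp
qed

lemma excess_core_le:
  assumes "\<beta> \<in> U_set n" "1 \<le> i" "i \<le> n" "i \<le> r" "r \<le> carrel_hi n lam i"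
  shows "excess (core n lam \<beta>) i \<le> excess \<beta> r"
  using excess_core[OF assms(1-3)] excess_xcrit_le[OF assms(2-5)] by simp

lemma excess_core_mono:
  assumes "\<beta> \<in> U_set n" "1 \<le> i" "i \<le> n" "i \<le> r" "r \<le> carrel_hi n lam i"
  shows "excess (core n lam \<beta>) i \<le> excess (core n lam \<beta>) r"
proof -
  have r: "1 \<le> r" "r \<le> n" using assms(2,4,5) carrel_hi_le[of n lam i] by linarith+
  have "carrel_hi n lam r = carrel_hi n lam i" using carrel_eq[OF assms(2,4,5)] by simp
  then have "r \<le> xcrit n lam \<beta> r" "xcrit n lam \<beta> r \<le> carrel_hi n lam i"
    using xcrit_mem(2)[OF r(2)] xcrit_le_carrel_hi[OF r(2), of lam \<beta>] by simp_all
  then have "excess (core n lam \<beta>) i \<le> excess \<beta> (xcrit n lam \<beta> r)"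
    using excess_core_le[OF assms(1-3)] assms(4) by simp
  then show ?thesis using excess_core[OF assms(1) r] by simp
qed

lemma core_in_U_set:
  assumes "\<beta> \<in> U_set n"
  shows "core n lam \<beta> \<in> U_set n"
proof -
  have "i \<le> core n lam \<beta> i \<and> core n lam \<beta> i \<le> n" if i: "1 \<le> i" "i \<le> n" for i
  proof -
    let ?x = "xcrit n lam \<beta> i"
    have "i \<le> ?x" using xcrit_mem(2)[OF i(2)] .
    have "?x \<le> n" using xcrit_le_carrel_hi[OF i(2), of lam \<beta>] carrel_hi_le[of n lam i] by linarith
    then have "?x \<le> \<beta> ?x" "\<beta> ?x \<le> n"
      using U_set_bounds[OF assms, of ?x] i(1) \<open>i \<le> ?x\<close> by simp_all
    then show ?thesis using excess_core[OF assms i, of lam] \<open>i \<le> ?x\<close> unfolding excess_def by simp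
  qed
  then show ?thesis unfolding U_set_def by (simp add: core_def)
qed

lemma core_Rset:
  assumes "\<beta> \<in> U_set n" "q \<in> Rset n lam"
  shows "core n lam \<beta> q = \<beta> q"
proof -
  have q: "1 \<le> q" "q \<le> n" using Rset_bounds[OF assms(2)] by auto
  have "xcrit n lam \<beta> q = q"
    using xcrit_mem(2)[OF q(2)] xcrit_le_carrel_hi[OF q(2)] carrel_hi_Rset[OF assms(2)]
    by (metis antisym)
  then show ?thesis using excess_core[OF assms(1) q, of lam] unfolding excess_def by simp
qed

lemma core_less_Suc:
  assumes "\<beta> \<in> U_set n" "1 \<le> i" "i < n" "i \<notin> Rset n lam"
  shows "core n lam \<beta> i < core n lam \<beta> (i+1)"
proof -
  have "carrel_hi n lam i \<noteq> i" using carrel_hi_in_Rset[of n lam i] assms(3,4) by auto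
  then have "i + 1 \<le> carrel_hi n lam i" using carrel_hi_ge[of i n lam] assms(3) by simp
  then show ?thesis using excess_core_mono[OF assms(1,2), of "i+1"] assms(3)
    unfolding excess_def by simp
qed

lemma core_zero_row:
  assumes "is_partition n lam" "\<beta> \<in> U_set n" "1 \<le> s" "s \<le> n" "lam s = 0"
  shows "core n lam \<beta> s = s"
proof -
  have "carrel_hi n lam s = n"
    using lam_less_beyond_carrel[OF assms(1,3,4), of n] carrel_hi_le[of n lam s] assms(5) by linarith
  then have "excess (core n lam \<beta>) s \<le> excess \<beta> n"
    using excess_core_le[OF assms(2-4), of n] assms(4) by simp
  moreover have "\<beta> n \<le> n" using U_set_bounds[OF assms(2), of n] assms(3,4) by simp
  moreover have "s \<le> core n lam \<beta> s"
    using U_set_bounds[OF core_in_U_set[OF assms(2)]] assms(3,4) by blast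
  ultimately show ?thesis unfolding excess_def by simp
qed

lemma core_in_UBP:
  assumes "\<beta> \<in> U_set n"
  shows "core n lam \<beta> \<in> UBP n lam"
proof -
  let ?d = "core n lam \<beta>"
  have "?d i \<le> platform n lam ?d i" if i: "1 \<le> i" "i \<le> n" for i
  proof -
    let ?x = "xcrit n lam ?d i"
    have x: "i \<le> ?x" "?x \<le> carrel_hi n lam i"
      using xcrit_mem(2)[OF i(2)] xcrit_le_carrel_hi[OF i(2)] by simp_all
    have "excess ?d i \<le> excess ?d ?x" using excess_core_mono[OF assms i x] .
    then show ?thesis unfolding platform_def excess_def using i x(1) by simp
  qed
  then show ?thesis using core_in_U_set[OF assms] unfolding UBP_def by simp
qed

lemma crit_ge_of_excess_const:
  assumes "z \<in> crit \<gamma> lo hi" "x \<le> hi"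
    and const: "\<And>r. lo < r \<Longrightarrow> r \<le> x \<Longrightarrow> excess \<gamma> r = excess \<gamma> x"
  shows "x \<le> z"
  using assms(1)
proof (induction rule: crit.induct)
  case crit_start
  then show ?case using assms(2) .
next
  case (crit_next z)
  let ?g = "GREATEST y. crit_step_cond \<gamma> lo z y"
  obtain y where "crit_step_cond \<gamma> lo z y" using crit_next.hyps by blast
  then have g: "lo < ?g" "?g < z" "excess \<gamma> ?g < excess \<gamma> z"
    using crit_step_cond_Greatest(1) crit_step_cond_iff by blast+
  show ?case
  proof (rule ccontr)
    assume "\<not> x \<le> ?g"
    then have "excess \<gamma> ?g = excess \<gamma> x" using const[of ?g] g(1) by simp
    moreover have "x \<noteq> z" using calculation g(3) by auto
    ultimately have "crit_step_cond \<gamma> lo z x"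
      using crit_next.IH g \<open>\<not> x \<le> ?g\<close> unfolding crit_step_cond_iff by simp
    then have "x \<le> ?g" by (rule crit_step_cond_Greatest(2))
    then show False using \<open>\<not> x \<le> ?g\<close> by simp
  qed
qed

lemma Min_crit_Rset:
  assumes "q \<in> Rset n lam"
  shows "Min (crit \<beta> q (carrel_hi n lam (q+1))) = xcrit n lam \<beta> (q+1)"
proof (rule Min_eqI)
  have q: "q + 1 \<le> n" using Rset_bounds[OF assms] by simp
  show "finite (crit \<beta> q (carrel_hi n lam (q+1)))" by (rule finite_crit)
  show "xcrit n lam \<beta> (q+1) \<in> crit \<beta> q (carrel_hi n lam (q+1))"
    using xcrit_mem(1)[OF q, of lam \<beta>] carrel_lo_Suc_Rset[OF assms] by simp
  show "xcrit n lam \<beta> (q+1) \<le> y" if "y \<in> crit \<beta> q (carrel_hi n lam (q+1))" for y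
  proof (rule xcrit_le_crit)
    show "y \<in> crit \<beta> (carrel_lo n lam (q+1)) (carrel_hi n lam (q+1))"
      using that carrel_lo_Suc_Rset[OF assms] by simp
    show "q + 1 \<le> y" using crit_bounds[OF that] carrel_hi_ge[OF q, of lam] by auto
  qed
qed

lemma core_flag_crit:
  assumes "\<beta> \<in> UGC n lam"
  shows "flag_crit n lam (core n lam \<beta>)"
  unfolding flag_crit_def
proof
  fix q assume qR: "q \<in> Rset n lam"
  have \<beta>U: "\<beta> \<in> U_set n" and \<beta>flag: "flag_crit n lam \<beta>" using assms unfolding UGC_def by auto
  let ?d = "core n lam \<beta>" and ?h = "carrel_hi n lam (q+1)" and ?x = "xcrit n lam \<beta> (q+1)"
  let ?m = "Min (crit ?d q ?h)"
  have q: "1 \<le> q + 1" "q + 1 \<le> n" using Rset_bounds[OF qR] by simp_all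
  have x: "q + 1 \<le> ?x" "?x \<le> ?h" using xcrit_mem(2)[OF q(2)] xcrit_le_carrel_hi[OF q(2)] by simp_all
  have excess_d: "excess ?d r = excess \<beta> ?x" if "q < r" "r \<le> ?x" for r
  proof -
    have "1 \<le> r" "r \<le> n" using that x carrel_hi_le[of n lam "q+1"] by linarith+
    then show ?thesis using excess_core[OF \<beta>U] xcrit_eq[OF q, of r] that by simp
  qed
  have m: "?m \<in> crit ?d q ?h" using finite_crit crit.crit_start by (intro Min_in) blast+
  have "?x \<le> ?m"
    using crit_ge_of_excess_const[OF m x(2)] excess_d excess_d[of ?x] x(1) by simp
  moreover have "?m \<le> ?h" using crit_bounds[OF m] by simp
  moreover have "carrel_hi n lam ?x = ?h" using carrel_eq[OF q(1) x] by simp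
  ultimately have "excess ?d ?x \<le> excess ?d ?m"
    using excess_core_mono[OF \<beta>U, of ?x ?m] x carrel_hi_le[of n lam "q+1"] by simp
  then have "?d ?x \<le> ?d ?m" using \<open>?x \<le> ?m\<close> unfolding excess_def by simp
  moreover have "?d ?x = \<beta> ?x" using excess_d[of ?x] x(1) unfolding excess_def by simp
  moreover have "\<beta> q \<le> \<beta> ?x"
    using \<beta>flag qR Min_crit_Rset[OF qR, of \<beta>] unfolding flag_crit_def by force
  ultimately show "?d q \<le> ?d ?m" using core_Rset[OF \<beta>U qR] by simp
qed

lemma core_gapless:
  assumes "\<beta> \<in> UGC n lam"
  shows "gapless n lam (core n lam \<beta>)"
proof -
  have "\<beta> \<in> U_set n" using assms unfolding UGC_def by simp
  then show ?thesis unfolding gapless_def UGC_def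
    using core_in_U_set core_flag_crit[OF assms] core_less_Suc by blast
qed

section \<open>Flagged tableaux with largest entries\<close>

lemma diagram_iff: "(i,j) \<in> diagram n lam \<longleftrightarrow> 1 \<le> i \<and> i \<le> n \<and> 1 \<le> j \<and> j \<le> lam i"
  unfolding diagram_def by auto

lemma finite_diagram: "finite (diagram n lam)"
proof -
  have "diagram n lam = Sigma {1..n} (\<lambda>i. {1..lam i})" unfolding diagram_def by auto
  then show ?thesis by simp
qed

lemma flagged_ssyt_column_increase:
  assumes "is_partition n lam" "flagged_ssyt n lam \<beta> T"
    "(i,j) \<in> diagram n lam" "i \<le> r" "(r,j) \<in> diagram n lam"
  shows "T i j + r \<le> T r j + i"
  using assms(4,5)
proof (induction r rule: dec_induct)
  case base
  then show ?case by simp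
next
  case (step k)
  have k: "1 \<le> k" "Suc k \<le> n" "1 \<le> j" "j \<le> lam (Suc k)"
    using step assms(3) by (auto simp: diagram_iff)
  then have "lam (Suc k) \<le> lam k" using assms(1) unfolding is_partition_def by simp
  then have "(k,j) \<in> diagram n lam" using k by (simp add: diagram_iff)
  then have "T i j + k \<le> T k j + i" "T k j < T (Suc k) j"
    using step assms(2) unfolding flagged_ssyt_def by auto
  then show ?case by simp
qed

lemma flagged_ssyt_ge_row:
  assumes "is_partition n lam" "flagged_ssyt n lam \<beta> T" "(i,j) \<in> diagram n lam"
  shows "i \<le> T i j"
proof -
  have ij: "1 \<le> i" "i \<le> n" "1 \<le> j" "j \<le> lam i" using assms(3) by (auto simp: diagram_iff)
  then have "lam i \<le> lam 1" using assms(1) unfolding is_partition_def by simp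
  then have top: "(1,j) \<in> diagram n lam" using ij by (simp add: diagram_iff)
  then have "1 \<le> T 1 j" using assms(2) unfolding flagged_ssyt_def by auto
  moreover have "T 1 j + i \<le> T i j + 1"
    using flagged_ssyt_column_increase[OF assms(1,2) top ij(1) assms(3)] .
  ultimately show ?thesis by simp
qed

text \<open>The largest entry a \<open>\<beta>\<close>-flagged tableau can have in cell \<open>(i,j)\<close>: the column
  increases strictly down to every row \<open>r \<ge> i\<close> reaching column \<open>j\<close>, whose entries are at
  most \<open>\<beta> r\<close>.\<close>
definition max_entry :: "nat \<Rightarrow> (nat \<Rightarrow> nat) \<Rightarrow> (nat \<Rightarrow> nat) \<Rightarrow> nat \<Rightarrow> nat \<Rightarrow> nat" where
  "max_entry n lam \<beta> i j = Min ((\<lambda>r. \<beta> r + i - r) ` {r. i \<le> r \<and> r \<le> n \<and> j \<le> lam r})"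

lemma max_entry_le:
  assumes "(i,j) \<in> diagram n lam" "i \<le> r" "r \<le> n" "j \<le> lam r"
  shows "max_entry n lam \<beta> i j \<le> \<beta> r + i - r"
  unfolding max_entry_def using assms by (intro Min_le) auto

lemma max_entry_attained:
  assumes "(i,j) \<in> diagram n lam"
  obtains r where "i \<le> r" "r \<le> n" "j \<le> lam r" "max_entry n lam \<beta> i j = \<beta> r + i - r"
proof -
  have "max_entry n lam \<beta> i j \<in> (\<lambda>r. \<beta> r + i - r) ` {r. i \<le> r \<and> r \<le> n \<and> j \<le> lam r}"
    unfolding max_entry_def using assms by (intro Min_in) (auto simp: diagram_iff)
  then show ?thesis using that by blast
qed

lemma max_entry_bounds:
  assumes "\<beta> \<in> U_set n" "(i,j) \<in> diagram n lam"
  shows "i \<le> max_entry n lam \<beta> i j" and "max_entry n lam \<beta> i j \<le> \<beta> i"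
proof -
  obtain r where r: "i \<le> r" "r \<le> n" "j \<le> lam r" "max_entry n lam \<beta> i j = \<beta> r + i - r"
    using max_entry_attained[OF assms(2)] .
  have "r \<le> \<beta> r" using U_set_bounds[OF assms(1), of r] r assms(2) by (auto simp: diagram_iff)
  then show "i \<le> max_entry n lam \<beta> i j" using r(4) by simp
  show "max_entry n lam \<beta> i j \<le> \<beta> i"
    using max_entry_le[OF assms(2), of i \<beta>] assms(2) by (auto simp: diagram_iff)
qed

lemma flagged_ssyt_le_max_entry:
  assumes "is_partition n lam" "flagged_ssyt n lam \<beta> T" "(i,j) \<in> diagram n lam"
  shows "T i j \<le> max_entry n lam \<beta> i j"
proof -
  obtain r where r: "i \<le> r" "r \<le> n" "j \<le> lam r" "max_entry n lam \<beta> i j = \<beta> r + i - r"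
    using max_entry_attained[OF assms(3)] .
  have rj: "(r,j) \<in> diagram n lam" using r assms(3) by (auto simp: diagram_iff)
  then have "T r j \<le> \<beta> r" using assms(2) unfolding flagged_ssyt_def by auto
  moreover have "T i j + r \<le> T r j + i"
    using flagged_ssyt_column_increase[OF assms r(1) rj] .
  ultimately show ?thesis using r(4) by simp
qed

definition max_tableau :: "nat \<Rightarrow> (nat \<Rightarrow> nat) \<Rightarrow> (nat \<Rightarrow> nat) \<Rightarrow> nat \<Rightarrow> nat \<Rightarrow> nat \<Rightarrow> nat" where
  "max_tableau n lam \<beta> s =
     (\<lambda>i j. if (i,j) \<in> diagram n lam then if i < s then i else max_entry n lam \<beta> i j else 0)"

lemma max_tableau_flagged:
  assumes "\<beta> \<in> U_set n"
  shows "flagged_ssyt n lam \<beta> (max_tableau n lam \<beta> s)"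
  unfolding flagged_ssyt_def
proof (intro conjI allI impI ballI)
  fix c assume c: "c \<in> diagram n lam"
  then obtain i j where ij: "c = (i,j)" "(i,j) \<in> diagram n lam" by (cases c) auto
  have "i \<le> \<beta> i" "\<beta> i \<le> n" using U_set_bounds[OF assms, of i] ij by (auto simp: diagram_iff)
  then show "case c of (i,j) \<Rightarrow> 1 \<le> max_tableau n lam \<beta> s i j \<and> max_tableau n lam \<beta> s i j \<le> n
      \<and> max_tableau n lam \<beta> s i j \<le> \<beta> i"
    using ij max_entry_bounds[OF assms ij(2)] unfolding max_tableau_def by (auto simp: diagram_iff)
next
  fix i j assume "(i,j) \<notin> diagram n lam"
  then show "max_tableau n lam \<beta> s i j = 0" unfolding max_tableau_def by simp
next
  fix i j assume ij: "(i,j) \<in> diagram n lam" and right: "(i,j+1) \<in> diagram n lam"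
  obtain r where r: "i \<le> r" "r \<le> n" "j+1 \<le> lam r" "max_entry n lam \<beta> i (j+1) = \<beta> r + i - r"
    using max_entry_attained[OF right] .
  then have "max_entry n lam \<beta> i j \<le> max_entry n lam \<beta> i (j+1)"
    using max_entry_le[OF ij r(1,2)] by simp
  then show "max_tableau n lam \<beta> s i j \<le> max_tableau n lam \<beta> s i (j+1)"
    using ij right unfolding max_tableau_def by simp
next
  fix i j assume ij: "(i,j) \<in> diagram n lam" and below: "(i+1,j) \<in> diagram n lam"
  obtain r where r: "i+1 \<le> r" "r \<le> n" "j \<le> lam r" "max_entry n lam \<beta> (i+1) j = \<beta> r + (i+1) - r"
    using max_entry_attained[OF below] .
  have "r \<le> \<beta> r" using U_set_bounds[OF assms, of r] r by simp
  then have "max_entry n lam \<beta> i j < max_entry n lam \<beta> (i+1) j"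
    using max_entry_le[OF ij, of r \<beta>] r by simp
  then show "max_tableau n lam \<beta> s i j < max_tableau n lam \<beta> s (i+1) j"
    using ij below max_entry_bounds(1)[OF assms below] unfolding max_tableau_def by simp
qed

definition rows_minimal_below :: "nat \<Rightarrow> (nat \<Rightarrow> nat) \<Rightarrow> (nat \<Rightarrow> nat \<Rightarrow> nat) \<Rightarrow> nat \<Rightarrow> bool" where
  "rows_minimal_below n lam T s \<longleftrightarrow> (\<forall>i j. (i,j) \<in> diagram n lam \<longrightarrow> i < s \<longrightarrow> T i j = i)"

lemma content_rows_minimal_below:
  assumes "is_partition n lam" "flagged_ssyt n lam \<beta> T" "rows_minimal_below n lam T s"
    "1 \<le> k" "k < s" "k \<le> n"
  shows "content n lam T k = lam k"
proof -
  have "{(i,j) \<in> diagram n lam. T i j = k} = {k} \<times> {1..lam k}"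
  proof (intro set_eqI iffI)
    fix c assume "c \<in> {(i,j) \<in> diagram n lam. T i j = k}"
    then obtain i j where c: "c = (i,j)" "(i,j) \<in> diagram n lam" "T i j = k" by blast
    then have "i \<le> k" using flagged_ssyt_ge_row[OF assms(1,2)] by blast
    then have "T i j = i" using assms(3,5) c unfolding rows_minimal_below_def by simp
    then show "c \<in> {k} \<times> {1..lam k}" using c by (auto simp: diagram_iff)
  next
    fix c assume "c \<in> {k} \<times> {1..lam k}"
    then show "c \<in> {(i,j) \<in> diagram n lam. T i j = k}"
      using assms(3-6) unfolding rows_minimal_below_def by (auto simp: diagram_iff)
  qed
  then show ?thesis unfolding content_def by simp
qed

lemma rows_minimal_below_of_content:
  assumes "is_partition n lam" "flagged_ssyt n lam \<beta> T"
    and content: "\<And>k. 1 \<le> k \<Longrightarrow> k < s \<Longrightarrow> k \<le> n \<Longrightarrow> content n lam T k = lam k"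
  shows "rows_minimal_below n lam T s"
proof -
  have "\<forall>j. (i,j) \<in> diagram n lam \<longrightarrow> i < s \<longrightarrow> T i j = i" for i
  proof (induction i rule: less_induct)
    case (less i)
    show ?case
    proof (intro allI impI)
      fix j assume ij: "(i,j) \<in> diagram n lam" and "i < s"
      let ?A = "{(r,j') \<in> diagram n lam. T r j' = i}" and ?B = "{i} \<times> {1..lam i}"
      have "?A \<subseteq> ?B"
      proof
        fix c assume "c \<in> ?A"
        then obtain r j' where c: "c = (r,j')" "(r,j') \<in> diagram n lam" "T r j' = i" by blast
        then have "r \<le> i" using flagged_ssyt_ge_row[OF assms(1,2)] by blast
        moreover have "\<not> r < i" using less.IH c \<open>i < s\<close> by fastforce
        ultimately show "c \<in> ?B" using c by (auto simp: diagram_iff)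
      qed
      moreover have "card ?A = card ?B"
        using content \<open>i < s\<close> ij unfolding content_def by (auto simp: diagram_iff)
      ultimately have "?A = ?B" by (intro card_subset_eq) auto
      moreover have "(i,j) \<in> ?B" using ij by (auto simp: diagram_iff)
      ultimately have "(i,j) \<in> ?A" by simp
      then show "T i j = i" by simp
    qed
  qed
  then show ?thesis unfolding rows_minimal_below_def by blast
qed

lemma content_cong:
  "(\<And>i j. (i,j) \<in> diagram n lam \<Longrightarrow> T i j = T' i j) \<Longrightarrow> content n lam T = content n lam T'"
  unfolding content_def by (intro ext arg_cong[where f = card]) auto

definition entry_sum :: "nat \<Rightarrow> (nat \<Rightarrow> nat) \<Rightarrow> (nat \<Rightarrow> nat \<Rightarrow> nat) \<Rightarrow> nat" where
  "entry_sum n lam T = (\<Sum>(i,j)\<in>diagram n lam. T i j)"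

lemma entry_sum_eq_content:
  assumes "flagged_ssyt n lam \<beta> T"
  shows "entry_sum n lam T = (\<Sum>k\<le>n. k * content n lam T k)"
proof -
  let ?D = "diagram n lam"
  have le: "case_prod T c \<le> n" if "c \<in> ?D" for c using assms that unfolding flagged_ssyt_def by auto
  have "entry_sum n lam T = (\<Sum>c\<in>?D. \<Sum>k\<le>n. if case_prod T c = k then k else 0)"
    unfolding entry_sum_def by (rule sum.cong) (auto dest: le)
  also have "\<dots> = (\<Sum>k\<le>n. \<Sum>c\<in>?D. if case_prod T c = k then k else 0)" by (rule sum.swap)
  also have "\<dots> = (\<Sum>k\<le>n. k * content n lam T k)"
  proof (rule sum.cong)
    fix k
    have "(\<Sum>c\<in>?D. if case_prod T c = k then k else 0) = k * card {c\<in>?D. case_prod T c = k}"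
      using finite_diagram by (simp add: sum.If_cases Int_def)
    also have "{c\<in>?D. case_prod T c = k} = {(i,j)\<in>?D. T i j = k}" by auto
    finally show "(\<Sum>c\<in>?D. if case_prod T c = k then k else 0) = k * content n lam T k"
      unfolding content_def .
  qed simp
  finally show ?thesis .
qed

lemma finite_flagged_ssyt: "finite {T. flagged_ssyt n lam \<beta> T \<and> P T}"
proof -
  let ?D = "diagram n lam"
  let ?F = "{f :: nat \<times> nat \<Rightarrow> nat. \<forall>x. (x \<in> ?D \<longrightarrow> f x \<in> {..n}) \<and> (x \<notin> ?D \<longrightarrow> f x = 0)}"
  have "finite ?F" by (rule finite_set_of_finite_funs) (auto simp: finite_diagram)
  moreover have "{T. flagged_ssyt n lam \<beta> T \<and> P T} \<subseteq> curry ` ?F"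
  proof
    fix T assume "T \<in> {T. flagged_ssyt n lam \<beta> T \<and> P T}"
    then have "case_prod T \<in> ?F" unfolding flagged_ssyt_def by auto
    moreover have "T = curry (case_prod T)" by simp
    ultimately show "T \<in> curry ` ?F" by blast
  qed
  ultimately show ?thesis using finite_subset by blast
qed

lemma schur_coeff_pos_iff:
  "0 < schur_coeff n lam \<beta> \<theta> \<longleftrightarrow> (\<exists>T. flagged_ssyt n lam \<beta> T \<and> content n lam T = \<theta>)"
proof -
  have "finite {T. flagged_ssyt n lam \<beta> T \<and> content n lam T = \<theta>}" by (rule finite_flagged_ssyt)
  then show ?thesis unfolding schur_coeff_def by (simp add: card_gt_0_iff)
qed

section \<open>Flags with equal flagged Schur polynomials\<close>

lemma le_max_tableau:
  assumes "is_partition n lam" "flagged_ssyt n lam \<beta> T" "rows_minimal_below n lam T s"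
    "(i,j) \<in> diagram n lam"
  shows "T i j \<le> max_tableau n lam \<beta> s i j"
  using assms flagged_ssyt_le_max_entry[OF assms(1,2,4)]
  unfolding rows_minimal_below_def max_tableau_def by simp

lemma flagged_ssyt_dominated_with_content_max_tableau:
  assumes "is_partition n lam" "\<beta>1 \<in> U_set n" "\<beta>2 \<in> U_set n"
    "schur_coeff n lam \<beta>1 = schur_coeff n lam \<beta>2"
  obtains T where "flagged_ssyt n lam \<beta>2 T" "content n lam T = content n lam (max_tableau n lam \<beta>1 s)"
    "\<And>i j. (i,j) \<in> diagram n lam \<Longrightarrow> T i j \<le> max_tableau n lam \<beta>2 s i j"
proof -
  let ?M1 = "max_tableau n lam \<beta>1 s"
  have M1: "flagged_ssyt n lam \<beta>1 ?M1" using max_tableau_flagged[OF assms(2)] .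
  then have "0 < schur_coeff n lam \<beta>2 (content n lam ?M1)"
    using schur_coeff_pos_iff assms(4) by metis
  then obtain T where T: "flagged_ssyt n lam \<beta>2 T" "content n lam T = content n lam ?M1"
    using schur_coeff_pos_iff by blast
  have "rows_minimal_below n lam ?M1 s" unfolding rows_minimal_below_def max_tableau_def by simp
  then have "rows_minimal_below n lam T s"
    using rows_minimal_below_of_content[OF assms(1) T(1)] content_rows_minimal_below[OF assms(1) M1]
      T(2) by simp
  then show ?thesis using that T le_max_tableau[OF assms(1) T(1)] by blast
qed

lemma content_max_tableau_eq:
  assumes "is_partition n lam" "\<beta>1 \<in> U_set n" "\<beta>2 \<in> U_set n"
    "schur_coeff n lam \<beta>1 = schur_coeff n lam \<beta>2"
  shows "content n lam (max_tableau n lam \<beta>1 s) = content n lam (max_tableau n lam \<beta>2 s)"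
proof -
  let ?M1 = "max_tableau n lam \<beta>1 s" and ?M2 = "max_tableau n lam \<beta>2 s"
  have entry_sum_le: "entry_sum n lam (max_tableau n lam \<beta> s) \<le> entry_sum n lam (max_tableau n lam \<beta>' s)"
    if \<beta>: "\<beta> \<in> U_set n" "\<beta>' \<in> U_set n" "schur_coeff n lam \<beta> = schur_coeff n lam \<beta>'" for \<beta> \<beta>'
  proof -
    obtain T where T: "flagged_ssyt n lam \<beta>' T" "content n lam T = content n lam (max_tableau n lam \<beta> s)"
      "\<And>i j. (i,j) \<in> diagram n lam \<Longrightarrow> T i j \<le> max_tableau n lam \<beta>' s i j"
      using flagged_ssyt_dominated_with_content_max_tableau[OF assms(1) \<beta>, of s] by blast
    have "entry_sum n lam (max_tableau n lam \<beta> s) = entry_sum n lam T"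
      using entry_sum_eq_content T(1,2) max_tableau_flagged[OF \<beta>(1)] by metis
    also have "\<dots> \<le> entry_sum n lam (max_tableau n lam \<beta>' s)"
      unfolding entry_sum_def using T(3) by (intro sum_mono) auto
    finally show ?thesis .
  qed
  obtain T where T: "flagged_ssyt n lam \<beta>2 T" "content n lam T = content n lam ?M1"
    "\<And>i j. (i,j) \<in> diagram n lam \<Longrightarrow> T i j \<le> ?M2 i j"
    using flagged_ssyt_dominated_with_content_max_tableau[OF assms, of s] by blast
  have "entry_sum n lam T = entry_sum n lam ?M1"
    using entry_sum_eq_content T(1,2) max_tableau_flagged[OF assms(2)] by metis
  also have "\<dots> = entry_sum n lam ?M2"
    using entry_sum_le[OF assms(2-4)] entry_sum_le[OF assms(3,2) assms(4)[symmetric]] by simp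
  finally have "T i j = ?M2 i j" if "(i,j) \<in> diagram n lam" for i j
    using sum_mono_inv[of "case_prod T" "diagram n lam" "case_prod ?M2" "(i,j)"] T(3) that
      finite_diagram unfolding entry_sum_def by fastforce
  then have "content n lam T = content n lam ?M2" by (rule content_cong)
  then show ?thesis using T(2) by simp
qed

lemma content_max_tableau:
  assumes "s \<le> k"
  shows "content n lam (max_tableau n lam \<beta> s) k =
    card {(i,j) \<in> diagram n lam. s \<le> i \<and> max_entry n lam \<beta> i j = k}"
proof -
  have "{(i,j) \<in> diagram n lam. max_tableau n lam \<beta> s i j = k} =
      {(i,j) \<in> diagram n lam. s \<le> i \<and> max_entry n lam \<beta> i j = k}"
    using assms unfolding max_tableau_def by auto
  then show ?thesis unfolding content_def by simp
qed

lemma card_row_max_entry_eq: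
  assumes "is_partition n lam" "\<beta>1 \<in> U_set n" "\<beta>2 \<in> U_set n"
    "schur_coeff n lam \<beta>1 = schur_coeff n lam \<beta>2" "s < k"
  shows "card {(i,j) \<in> diagram n lam. i = s \<and> max_entry n lam \<beta>1 i j = k} =
    card {(i,j) \<in> diagram n lam. i = s \<and> max_entry n lam \<beta>2 i j = k}"
proof -
  define cells where "cells P \<beta> = {(i,j) \<in> diagram n lam. P i \<and> max_entry n lam \<beta> i j = k}"
    for P \<beta>
  have finite: "finite (cells P \<beta>)" for P \<beta>
    unfolding cells_def by (rule finite_subset[OF _ finite_diagram]) auto
  have split: "card (cells (\<lambda>i. s \<le> i) \<beta>) = card (cells (\<lambda>i. i = s) \<beta>) + card (cells (\<lambda>i. s+1 \<le> i) \<beta>)"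
    for \<beta>
  proof -
    have "cells (\<lambda>i. s \<le> i) \<beta> = cells (\<lambda>i. i = s) \<beta> \<union> cells (\<lambda>i. s+1 \<le> i) \<beta>"
      unfolding cells_def by auto
    moreover have "cells (\<lambda>i. i = s) \<beta> \<inter> cells (\<lambda>i. s+1 \<le> i) \<beta> = {}" unfolding cells_def by auto
    ultimately show ?thesis using finite by (simp add: card_Un_disjoint)
  qed
  have "card (cells (\<lambda>i. t \<le> i) \<beta>1) = card (cells (\<lambda>i. t \<le> i) \<beta>2)" if "t \<le> k" for t
    using content_max_tableau[OF that] content_max_tableau_eq[OF assms(1-4), of t]
    unfolding cells_def by metis
  then show ?thesis using split[of \<beta>1] split[of \<beta>2] assms(5) unfolding cells_def by simp
qed

lemma max_entry_core_last_column:
  assumes "is_partition n lam" "\<eta> \<in> U_set n" "1 \<le> s" "s \<le> n" "1 \<le> lam s"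
  shows "max_entry n lam (core n lam \<eta>) s (lam s) = core n lam \<eta> s"
proof (rule antisym)
  let ?d = "core n lam \<eta>"
  have D: "(s, lam s) \<in> diagram n lam" using assms by (simp add: diagram_iff)
  show "max_entry n lam ?d s (lam s) \<le> ?d s"
    using max_entry_bounds(2)[OF core_in_U_set[OF assms(2)] D] .
  obtain r where r: "s \<le> r" "r \<le> n" "lam s \<le> lam r" "max_entry n lam ?d s (lam s) = ?d r + s - r"
    using max_entry_attained[OF D] .
  have "r \<le> carrel_hi n lam s" using lam_less_beyond_carrel[OF assms(1,3,4), of r] r by force
  then have "excess ?d s \<le> excess ?d r" using excess_core_mono[OF assms(2-4) r(1)] by simp
  then show "?d s \<le> max_entry n lam ?d s (lam s)" using r(1,4) unfolding excess_def by simp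
qed

lemma core_le_of_schur_coeff_eq:
  assumes "is_partition n lam" "\<eta> \<in> U_set n" "\<beta> \<in> U_set n"
    "schur_coeff n lam \<beta> = schur_coeff n lam (core n lam \<eta>)" "1 \<le> s" "s \<le> n"
  shows "core n lam \<eta> s \<le> \<beta> s"
proof -
  let ?d = "core n lam \<eta>"
  have "s \<le> \<beta> s" using U_set_bounds[OF assms(3,5,6)] by simp
  moreover have "?d s \<le> \<beta> s" if "lam s \<noteq> 0" "s < ?d s"
  proof -
    let ?row = "\<lambda>\<gamma>. {(i,j) \<in> diagram n lam. i = s \<and> max_entry n lam \<gamma> i j = ?d s}"
    have finite: "finite (?row \<gamma>)" for \<gamma> by (rule finite_subset[OF _ finite_diagram]) auto
    have "(s, lam s) \<in> ?row ?d"
      using max_entry_core_last_column[OF assms(1,2,5,6)] that(1) assms(5,6)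
      by (simp add: diagram_iff)
    then have "card (?row ?d) \<noteq> 0" using finite[of ?d] card_0_eq by blast
    then have "card (?row \<beta>) \<noteq> 0"
      using card_row_max_entry_eq[OF assms(1,3) core_in_U_set[OF assms(2)] assms(4) that(2)] by simp
    then have "?row \<beta> \<noteq> {}" by (metis card.empty)
    then obtain j where "(s,j) \<in> diagram n lam" "max_entry n lam \<beta> s j = ?d s" by auto
    then show ?thesis using max_entry_bounds(2)[OF assms(3)] by metis
  qed
  ultimately show ?thesis
    using core_zero_row[OF assms(1,2,5,6)] by (cases "lam s = 0"; cases "s < ?d s") auto
qed

section \<open>Counting monomials\<close>

lemma num_monomials_h_coeff:
  "num_monomials (h_coeff u i k) = (if 0 \<le> u then card (multisets_of_size {i..k} (nat u)) else 0)"
  unfolding num_monomials_def h_coeff_def multisets_of_size_def by (auto intro: arg_cong[where f = card])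

lemma num_monomials_h_coeff_mono:
  "k \<le> k' \<Longrightarrow> num_monomials (h_coeff u i k) \<le> num_monomials (h_coeff u i k')"
  unfolding num_monomials_h_coeff
  by (auto intro!: card_mono finite_multisets_of_size multisets_of_size_mono)

lemma num_monomials_h_coeff_strict_mono:
  assumes "k < k'" "1 \<le> u" "i \<le> k'"
  shows "num_monomials (h_coeff u i k) < num_monomials (h_coeff u i k')"
proof -
  have "replicate_mset (nat u) k' \<in> multisets_of_size {i..k'} (nat u) - multisets_of_size {i..k} (nat u)"
    using assms unfolding multisets_of_size_def by auto
  then have "multisets_of_size {i..k} (nat u) \<subset> multisets_of_size {i..k'} (nat u)"
    using multisets_of_size_mono[of "{i..k}" "{i..k'}"] assms(1) by fastforce
  then show ?thesis
    unfolding num_monomials_h_coeff using assms(2) by (auto intro: psubset_card_mono)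
qed

lemma gv_count_strict_mono:
  assumes "\<gamma> \<in> U_set n" "\<beta> \<in> U_set n" "\<And>j. j \<in> {1..n} \<Longrightarrow> \<gamma> j \<le> \<beta> j" "\<gamma> \<noteq> \<beta>"
  shows "gv_count n lam \<gamma> < gv_count n lam \<beta>"
proof -
  define f where "f b i j = num_monomials (h_coeff (int (lam j) - int j + int i) i (b j))" for b i j
  have "\<exists>j \<in> {1..n}. \<gamma> j \<noteq> \<beta> j"
  proof (rule ccontr)
    assume "\<not> ?thesis"
    then have "\<gamma> j = \<beta> j" for j using assms(1,2) unfolding U_set_def by (cases "j \<in> {1..n}") auto
    then show False using assms(4) by blast
  qed
  then obtain j0 where j0: "j0 \<in> {1..n}" "\<gamma> j0 < \<beta> j0" using assms(3) le_neq_implies_less by blast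
  \<comment> \<open>the entry \<open>(i0, j0)\<close> is \<open>h\<^sub>u\<close> with \<open>u = \<lambda>\<^sub>j\<^sub>0 - j0 + i0 \<ge> 1\<close>\<close>
  define i0 where "i0 = (if 1 \<le> lam j0 then j0 else j0 + 1)"
  have "j0 \<le> \<gamma> j0" "\<beta> j0 \<le> n" using U_set_bounds[OF assms(1)] U_set_bounds[OF assms(2)] j0(1) by auto
  then have i0: "i0 \<in> {1..n}" "1 \<le> int (lam j0) - int j0 + int i0" "i0 \<le> \<beta> j0"
    using j0 unfolding i0_def by auto
  have le: "f \<gamma> i j \<le> f \<beta> i j" if "j \<in> {1..n}" for i j
    unfolding f_def using assms(3)[OF that] by (rule num_monomials_h_coeff_mono)
  have "f \<gamma> i0 j0 < f \<beta> i0 j0"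
    unfolding f_def using j0(2) i0(2,3) by (rule num_monomials_h_coeff_strict_mono)
  then have "(\<Sum>j\<in>{1..n}. f \<gamma> i0 j) < (\<Sum>j\<in>{1..n}. f \<beta> i0 j)"
    using le j0(1) by (intro sum_strict_mono_ex1) auto
  then have "(\<Sum>i\<in>{1..n}. \<Sum>j\<in>{1..n}. f \<gamma> i j) < (\<Sum>i\<in>{1..n}. \<Sum>j\<in>{1..n}. f \<beta> i j)"
    using le i0(1) by (intro sum_strict_mono_ex1 ballI sum_mono) auto
  then show ?thesis unfolding gv_count_def f_def .
qed

theorem proposition8p3:
  fixes n :: nat and lam :: "nat \<Rightarrow> nat" and \<eta> :: "nat \<Rightarrow> nat"
  assumes "1 \<le> n"
    and "is_partition n lam"
    and "\<eta> \<in> UGC n lam"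
  shows "gapless n lam (core n lam \<eta>) \<and> max_efficiency n lam (core n lam \<eta>)"
proof -
  let ?d = "core n lam \<eta>"
  have \<eta>U: "\<eta> \<in> U_set n" using assms(3) unfolding UGC_def by simp
  have gapless: "gapless n lam ?d" using core_gapless[OF assms(3)] .
  have "gv_count n lam ?d < gv_count n lam \<eta>'"
    if "\<eta>' \<in> U_set n" "\<eta>' \<noteq> ?d" "schur_coeff n lam \<eta>' = schur_coeff n lam ?d" for \<eta>'
    using gv_count_strict_mono[OF core_in_U_set[OF \<eta>U] that(1)]
      core_le_of_schur_coeff_eq[OF assms(2) \<eta>U that(1,3)] that(2) by force
  then show ?thesis
    using gapless core_in_UBP[OF \<eta>U] unfolding max_efficiency_def gapless_def UBP_def by blast
qed

end
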